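(* Let $m\ge1$ and $\mathfrak{g}_m=\mathfrak{sl}(2)\ltimes V(m)$. Let $V$ and $W$ be uniserial $\mathfrak{g}_m$-modules with socle decompositions $V=V(a_0)\oplus\cdots\oplus V(a_\ell)$ and $W=V(b_0)\oplus\cdots\oplus V(b_{\ell'})$, where $\ell,\ell'\ge1$. Let $v_0\in V(a_{i_0})\otimes V(b_{j_0})\subset V\otimes W$ be a highest weight vector (for $\mathfrak{sl}(2)$). For $s=0,\dots,m$ let $(e_sv_0)_1$ denote the component of $e_sv_0$ in $V(a_{i_0-1})\otimes V(b_{j_0})$ and $(e_sv_0)_2$ its component in $V(a_{i_0})\otimes V(b_{j_0-1})$ (with respect to the decomposition $V\otimes W=\bigoplus_{i,j}V(a_i)\otimes V(b_j)$; these components are $0$ when $i_0=0$, resp. $j_0=0$). Then: (i) $(e_sv_0)_1=0$ for all $s=0,\dots,m$ if and only if $i_0=0$; (ii) $(e_sv_0)_2=0$ for all $s=0,\dots,m$ if and only if $j_0=0$.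
   Context: $\mathbb{F}$ is a field of characteristic zero; all modules are finite dimensional. $\{e,h,f\}$ is the standard basis of $\mathfrak{sl}(2)$ and $V(a)$ denotes the irreducible $\mathfrak{sl}(2)$-module of highest weight $a\ge0$ (dimension $a+1$). $\mathfrak{g}_m=\mathfrak{sl}(2)\ltimes V(m)$ where $\mathfrak{r}=V(m)$ is an abelian ideal on which $\mathfrak{sl}(2)$ acts as on $V(m)$; $\{e_0,\dots,e_m\}$ is a basis of $\mathfrak{r}=V(m)$ consisting of $h$-weight vectors ($e_s$ of weight $m-2s$). A module is uniserial if it has a unique composition series, i.e. its socle series $0=\mathrm{soc}^0\subset\mathrm{soc}^1\subset\cdots\subset\mathrm{soc}^n=V$ has irreducible factors. A socle decomposition of a uniserial $\mathfrak{g}_m$-module $V$ of composition length $\ell+1$ is a decomposition $V=V(a_0)\oplus\cdots\oplus V(a_\ell)$ into irreducible $\mathfrak{sl}(2)$-submodules such that $\mathrm{soc}^{k}(V)=V(a_0)\oplus\cdots\oplus V(a_{k-1})$ for all $k$ (so $V(a_{k})\cong\mathrm{soc}^{k+1}(V)/\mathrm{soc}^{k}(V)$ and $\mathfrak{r}V(a_k)\subset V(a_0)\oplus\cdots\oplus V(a_{k-1})$). A highest weight vector is a nonzero $h$-eigenvector annihilated by $e$. *)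

theory Defs
  imports "HOL-Analysis.Analysis"
begin

text \<open>A representation of g_m = sl(2) semidirect V(m) on the coordinate space 'a^'n:
  matrices for e, h, f and for the basis vectors e_0, ..., e_m of the abelian ideal r = V(m).\<close>
record ('a, 'n) gmrep =
  eop :: "'a^'n^'n"
  hop :: "'a^'n^'n"
  fop :: "'a^'n^'n"
  rop :: "nat \<Rightarrow> 'a^'n^'n"

definition bracket :: "'a::field^'n^'n \<Rightarrow> 'a^'n^'n \<Rightarrow> 'a^'n^'n" where
  "bracket A B = A ** B - B ** A"

definition msc :: "'a::field \<Rightarrow> 'a^'n^'n \<Rightarrow> 'a^'n^'n" where
  "msc c A = (\<chi> i j. c * A $ i $ j)"

definition gm_module :: "nat \<Rightarrow> ('a::field_char_0, 'n::finite) gmrep \<Rightarrow> bool" where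
  "gm_module m \<rho> \<longleftrightarrow>
     bracket (hop \<rho>) (eop \<rho>) = msc 2 (eop \<rho>) \<and>
     bracket (hop \<rho>) (fop \<rho>) = msc (-2) (fop \<rho>) \<and>
     bracket (eop \<rho>) (fop \<rho>) = hop \<rho> \<and>
     (\<forall>s t. s \<le> m \<longrightarrow> t \<le> m \<longrightarrow> bracket (rop \<rho> s) (rop \<rho> t) = 0) \<and>
     (\<forall>s\<le>m. bracket (hop \<rho>) (rop \<rho> s) = msc (of_int (int m - 2 * int s)) (rop \<rho> s)) \<and>
     (\<forall>s\<le>m. bracket (eop \<rho>) (rop \<rho> s) =
               (if s = 0 then 0 else msc (of_nat (s * (m + 1 - s))) (rop \<rho> (s - 1)))) \<and>
     (\<forall>s\<le>m. bracket (fop \<rho>) (rop \<rho> s) = (if s = m then 0 else rop \<rho> (s + 1)))"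

definition sl2_submodule :: "('a::field, 'n::finite) gmrep \<Rightarrow> ('a^'n) set \<Rightarrow> bool" where
  "sl2_submodule \<rho> U \<longleftrightarrow> vec.subspace U \<and>
     (\<forall>x\<in>U. eop \<rho> *v x \<in> U \<and> hop \<rho> *v x \<in> U \<and> fop \<rho> *v x \<in> U)"

definition gm_submodule :: "nat \<Rightarrow> ('a::field, 'n::finite) gmrep \<Rightarrow> ('a^'n) set \<Rightarrow> bool" where
  "gm_submodule m \<rho> U \<longleftrightarrow> sl2_submodule \<rho> U \<and> (\<forall>x\<in>U. \<forall>s\<le>m. rop \<rho> s *v x \<in> U)"

text \<open>Irreducible sl(2)-submodule (then it is isomorphic to V(a) with a+1 its dimension).\<close>
definition sl2_irred :: "('a::field, 'n::finite) gmrep \<Rightarrow> ('a^'n) set \<Rightarrow> bool" where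
  "sl2_irred \<rho> U \<longleftrightarrow> sl2_submodule \<rho> U \<and> U \<noteq> {0} \<and>
     (\<forall>U'. sl2_submodule \<rho> U' \<and> U' \<subseteq> U \<longrightarrow> U' = {0} \<or> U' = U)"

definition simple_quot :: "nat \<Rightarrow> ('a::field, 'n::finite) gmrep \<Rightarrow> ('a^'n) set \<Rightarrow> ('a^'n) set \<Rightarrow> bool" where
  "simple_quot m \<rho> S M \<longleftrightarrow> gm_submodule m \<rho> S \<and> gm_submodule m \<rho> M \<and> S \<subset> M \<and>
     (\<forall>N. gm_submodule m \<rho> N \<and> S \<subseteq> N \<and> N \<subseteq> M \<longrightarrow> N = S \<or> N = M)"

text \<open>Socle series: soc^0 = 0, soc^(k+1) = preimage of the socle of V/soc^k, i.e. the sum of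
  soc^k and all submodules M with M/soc^k irreducible.\<close>
fun soc :: "nat \<Rightarrow> ('a::field, 'n::finite) gmrep \<Rightarrow> nat \<Rightarrow> ('a^'n) set" where
  "soc m \<rho> 0 = {0}"
| "soc m \<rho> (Suc k) = vec.span (soc m \<rho> k \<union> \<Union>{M. simple_quot m \<rho> (soc m \<rho> k) M})"

definition uniserial :: "nat \<Rightarrow> ('a::field, 'n::finite) gmrep \<Rightarrow> bool" where
  "uniserial m \<rho> \<longleftrightarrow>
     (\<forall>k. soc m \<rho> k \<noteq> UNIV \<longrightarrow> simple_quot m \<rho> (soc m \<rho> k) (soc m \<rho> (Suc k)))"

definition socle_decomp ::
  "nat \<Rightarrow> ('a::field, 'n::finite) gmrep \<Rightarrow> nat \<Rightarrow> (nat \<Rightarrow> ('a^'n) set) \<Rightarrow> bool" where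
  "socle_decomp m \<rho> l U \<longleftrightarrow>
     (\<forall>k\<le>l. sl2_irred \<rho> (U k)) \<and>
     (\<forall>x. \<exists>us. (\<forall>k\<le>l. us k \<in> U k) \<and> (\<Sum>k\<le>l. us k) = x) \<and>
     (\<forall>us. (\<forall>k\<le>l. us k \<in> U k) \<and> (\<Sum>k\<le>l. us k) = 0 \<longrightarrow> (\<forall>k\<le>l. us k = 0)) \<and>
     (\<forall>k\<le>l + 1. soc m \<rho> k = vec.span (\<Union>i<k. U i))"

text \<open>Tensor products: V \<otimes> W is modelled as 'a^('n \<times> 'k) (basis e_i \<otimes> f_j).\<close>
definition tens :: "'a::field^'n \<Rightarrow> 'a^'k \<Rightarrow> 'a^('n \<times> 'k)" where
  "tens u w = (\<chi> p. u $ fst p * w $ snd p)"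

definition tsub :: "('a::field^'n) set \<Rightarrow> ('a^'k) set \<Rightarrow> ('a^('n \<times> 'k)) set" where
  "tsub U U' = vec.span {tens u w | u w. u \<in> U \<and> w \<in> U'}"

text \<open>Action of x on V \<otimes> W: A \<otimes> 1 + 1 \<otimes> B (Kronecker sum).\<close>
definition tact :: "'a::field^'n^'n \<Rightarrow> 'a^'k^'k \<Rightarrow> 'a^('n \<times> 'k)^('n \<times> 'k)" where
  "tact A B = (\<chi> p q. A $ fst p $ fst q * (if snd p = snd q then 1 else 0)
                     + (if fst p = fst q then 1 else 0) * B $ snd p $ snd q)"

definition component :: "'i set \<Rightarrow> ('i \<Rightarrow> 'v::comm_monoid_add set) \<Rightarrow> 'v \<Rightarrow> 'i \<Rightarrow> 'v" where
  "component I Ts x i = (THE y. \<exists>ys. (\<forall>j\<in>I. ys j \<in> Ts j) \<and> sum ys I = x \<and> ys i = y)"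

end

theory Submission
  imports Defs
begin

text \<open>
  Writing v0 = \<Sum>_b x_b \<otimes> w_b with x_b \<in> V(a_i0), the component (e_s v0)_1 is
  \<Sum>_b (e_s x_b)_(i0-1) \<otimes> w_b, so part (i) reduces to a statement about V alone: if i > 0,
  x \<in> V(a_i) and (e_s x)_(i-1) = 0 for all s, then x = 0. The vectors of V(a_i) with this
  property form an sl(2)-submodule, because [sl(2), r] \<subseteq> r and the projections onto the
  summands commute with sl(2). Were it all of V(a_i), then soc^(i-1) \<oplus> V(a_i) would be a
  g_m-submodule whose quotient by soc^(i-1) is irreducible, hence contained in soc^i; but
  V(a_i) \<inter> soc^i = 0. Part (ii) is symmetric.
\<close>

section \<open>Internal direct sums\<close>

lemma sum_matrix_vector_mult: "finite S \<Longrightarrow> sum A S *v x = (\<Sum>k\<in>S. A k *v x)"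
  by (induction rule: finite_induct) (auto simp: matrix_vector_mult_add_rdistrib)

lemma commuting_matrix_vector_mult: "Q ** A = A ** Q \<Longrightarrow> Q *v (A *v x) = A *v (Q *v x)"
  by (simp add: matrix_vector_mul_assoc)

locale direct_sum_decomposition =
  fixes l :: nat and U :: "nat \<Rightarrow> ('a::field^'n::finite) set"
  assumes subspace_summand: "\<And>k. k \<le> l \<Longrightarrow> vec.subspace (U k)"
    and sum_summands_exists: "\<And>x. \<exists>us. (\<forall>k\<le>l. us k \<in> U k) \<and> (\<Sum>k\<le>l. us k) = x"
    and sum_summands_eq_0: "\<And>us. (\<forall>k\<le>l. us k \<in> U k) \<Longrightarrow> (\<Sum>k\<le>l. us k) = 0 \<Longrightarrow> \<forall>k\<le>l. us k = 0"
begin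

definition decomp :: "'a^'n \<Rightarrow> nat \<Rightarrow> 'a^'n" where
  "decomp x = (SOME us. (\<forall>k\<le>l. us k \<in> U k) \<and> (\<Sum>k\<le>l. us k) = x)"

lemma decomp_spec: "(\<forall>k\<le>l. decomp x k \<in> U k) \<and> (\<Sum>k\<le>l. decomp x k) = x"
  unfolding decomp_def by (rule someI_ex[OF sum_summands_exists])

lemma decomp_unique:
  assumes "\<forall>k\<le>l. us k \<in> U k" "(\<Sum>k\<le>l. us k) = x" "k \<le> l"
  shows "decomp x k = us k"
proof -
  have "\<forall>k\<le>l. us k - decomp x k \<in> U k"
    using assms(1) decomp_spec subspace_summand by (simp add: vec.subspace_diff)
  moreover have "(\<Sum>k\<le>l. us k - decomp x k) = 0"
    using assms(2) decomp_spec[of x] by (simp add: sum_subtractf)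
  ultimately have "\<forall>k\<le>l. us k - decomp x k = 0" by (rule sum_summands_eq_0)
  then show ?thesis using assms(3) by auto
qed

lemma linear_decomp: "i \<le> l \<Longrightarrow> Vector_Spaces.linear (*s) (*s) (\<lambda>x. decomp x i)"
proof -
  assume i: "i \<le> l"
  have "decomp (x + y) i = decomp x i + decomp y i" for x y
    using decomp_spec subspace_summand
    by (intro decomp_unique[OF _ _ i]) (auto simp: vec.subspace_add sum.distrib)
  moreover have "decomp (c *s x) i = c *s decomp x i" for c x
    using decomp_spec subspace_summand
    by (intro decomp_unique[OF _ _ i]) (auto simp: vec.subspace_scale vec.scale_sum_right[symmetric])
  ultimately show ?thesis
    unfolding Vector_Spaces.linear_iff using vec.vector_space_axioms by auto
qed

definition proj :: "nat \<Rightarrow> 'a^'n^'n" where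
  "proj i = matrix (\<lambda>x. decomp x i)"

lemma proj_apply: "i \<le> l \<Longrightarrow> proj i *v x = decomp x i"
  unfolding proj_def by (rule matrix_works[OF linear_decomp])

lemma proj_in_summand: "i \<le> l \<Longrightarrow> proj i *v x \<in> U i"
  using proj_apply decomp_spec by auto

lemma sum_proj_apply: "(\<Sum>k\<le>l. proj k *v x) = x"
  using proj_apply decomp_spec by simp

lemma proj_unique:
  assumes "\<forall>k\<le>l. us k \<in> U k" "(\<Sum>k\<le>l. us k) = x" "k \<le> l"
  shows "proj k *v x = us k"
  using decomp_unique[OF assms] proj_apply assms(3) by simp

lemma proj_summand:
  assumes "i \<le> l" "j \<le> l" "x \<in> U j"
  shows "proj i *v x = (if i = j then x else 0)"
proof -
  have "proj i *v x = (\<lambda>k. if k = j then x else 0) i"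
    using assms subspace_summand vec.subspace_0
    by (intro proj_unique[OF _ _ assms(1)]) (auto simp: if_distrib)
  then show ?thesis by simp
qed

lemma sum_proj: "(\<Sum>k\<le>l. proj k) = mat 1"
  by (simp add: matrix_eq sum_matrix_vector_mult sum_proj_apply)

lemma proj_commute:
  assumes "i \<le> l" and "\<forall>k\<le>l. \<forall>x\<in>U k. A *v x \<in> U k"
  shows "proj i ** A = A ** proj i"
proof -
  have "proj i *v (A *v x) = A *v (proj i *v x)" for x
  proof -
    have "A *v x = (\<Sum>k\<le>l. A *v (proj k *v x))"
      using sum_proj_apply[of x] vec.sum by metis
    then show ?thesis
      using assms proj_in_summand by (subst proj_unique[OF _ _ assms(1)]) auto
  qed
  then show ?thesis by (simp add: matrix_eq matrix_vector_mul_assoc)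
qed

definition partial_sum :: "nat set \<Rightarrow> ('a^'n) set" where
  "partial_sum J = {x. \<forall>j\<le>l. j \<notin> J \<longrightarrow> proj j *v x = 0}"

lemma subspace_partial_sum: "vec.subspace (partial_sum J)"
  by (auto simp: partial_sum_def vec.subspace_def vec.add vec.scale)

lemma partial_sum_mono: "J \<subseteq> J' \<Longrightarrow> partial_sum J \<subseteq> partial_sum J'"
  by (auto simp: partial_sum_def)

lemma summand_subset_partial_sum: "j \<in> J \<Longrightarrow> j \<le> l \<Longrightarrow> U j \<subseteq> partial_sum J"
  by (auto simp: partial_sum_def proj_summand)

lemma summand_inter_partial_sum:
  assumes "j \<le> l" "j \<notin> J" "x \<in> U j" "x \<in> partial_sum J"
  shows "x = 0"
  using assms proj_summand[OF assms(1,1,3)] by (simp add: partial_sum_def)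

lemma diff_proj_in_partial_sum:
  assumes "i \<le> l" "x \<in> partial_sum (insert i J)"
  shows "x - proj i *v x \<in> partial_sum J"
proof -
  have "proj j *v (x - proj i *v x) = 0" if "j \<le> l" "j \<notin> J" for j
    using assms that proj_summand[OF that(1) assms(1) proj_in_summand[OF assms(1)]]
    by (auto simp: vec.diff partial_sum_def)
  then show ?thesis by (simp add: partial_sum_def)
qed

lemma span_summands_eq_partial_sum:
  assumes "J \<subseteq> {..l}"
  shows "vec.span (\<Union>j\<in>J. U j) = partial_sum J"
proof
  show "vec.span (\<Union>j\<in>J. U j) \<subseteq> partial_sum J"
    using assms summand_subset_partial_sum subspace_partial_sum
    by (intro vec.span_minimal) auto
  show "partial_sum J \<subseteq> vec.span (\<Union>j\<in>J. U j)"
  proof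
    fix x assume x: "x \<in> partial_sum J"
    have "x = (\<Sum>j\<le>l. proj j *v x)" using sum_proj_apply by simp
    also have "\<dots> = (\<Sum>j\<in>J. proj j *v x)"
      using x assms by (intro sum.mono_neutral_right) (auto simp: partial_sum_def)
    also have "\<dots> \<in> vec.span (\<Union>j\<in>J. U j)"
      using assms proj_in_summand by (intro vec.span_sum vec.span_base) auto
    finally show "x \<in> vec.span (\<Union>j\<in>J. U j)" .
  qed
qed

lemma partial_sum_invariant:
  assumes "\<forall>k\<le>l. \<forall>x\<in>U k. A *v x \<in> U k" "x \<in> partial_sum J"
  shows "A *v x \<in> partial_sum J"
  using assms proj_commute by (auto simp: partial_sum_def commuting_matrix_vector_mult)

end

section \<open>Tensor products of coordinate spaces\<close>

definition kron :: "'a::field^'n::finite^'n \<Rightarrow> 'a^'k::finite^'k \<Rightarrow> 'a^('n \<times> 'k)^('n \<times> 'k)" where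
  "kron A B = (\<chi> p q. A $ fst p $ fst q * B $ snd p $ snd q)"

lemma sum_UNIV_prod:
  "(\<Sum>q\<in>(UNIV::('n::finite \<times> 'k::finite) set). g q) = (\<Sum>a\<in>UNIV. \<Sum>b\<in>UNIV. g (a, b))"
  by (simp add: UNIV_Times_UNIV[symmetric] sum.cartesian_product del: UNIV_Times_UNIV)

lemma kron_tens: "kron A B *v tens u w = tens (A *v u) (B *v w)"
proof -
  have "(\<Sum>a'\<in>UNIV. \<Sum>b'\<in>UNIV. A $ a $ a' * B $ b $ b' * (u $ a' * w $ b')) =
        (\<Sum>a'\<in>UNIV. A $ a $ a' * u $ a') * (\<Sum>b'\<in>UNIV. B $ b $ b' * w $ b')" for a b
    by (simp add: sum_product) (simp add: algebra_simps)
  then show ?thesis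
    by (simp add: vec_eq_iff kron_def tens_def matrix_vector_mult_def sum_UNIV_prod)
qed

lemma tact_eq_kron: "tact A B = kron A (mat 1) + kron (mat 1) B"
  by (simp add: vec_eq_iff kron_def tact_def mat_def)

lemma kron_mat_1: "kron (mat 1) (mat 1) = (mat 1 :: 'a::field^('n::finite \<times> 'k::finite)^('n \<times> 'k))"
  by (auto simp: vec_eq_iff kron_def mat_def prod_eq_iff)

lemma kron_sum_left: "kron (sum f S) B = (\<Sum>i\<in>S. kron (f i) B)"
  by (induction S rule: infinite_finite_induct) (auto simp: vec_eq_iff kron_def distrib_right)

lemma kron_sum_right: "kron A (sum f S) = (\<Sum>i\<in>S. kron A (f i))"
  by (induction S rule: infinite_finite_induct) (auto simp: vec_eq_iff kron_def distrib_left)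

lemma tens_zero [simp]: "tens 0 w = 0" "tens u 0 = 0"
  by (auto simp: tens_def vec_eq_iff)

lemma tact_tens: "tact A B *v tens u w = tens (A *v u) w + tens u (B *v w)"
  by (simp add: tact_eq_kron matrix_vector_mult_add_rdistrib kron_tens)

lemma tens_in_tsub: "u \<in> S \<Longrightarrow> w \<in> T \<Longrightarrow> tens u w \<in> tsub S T"
  unfolding tsub_def by (intro vec.span_base) auto

lemma tsub_subset_subspace:
  assumes "vec.subspace X" "\<And>u w. u \<in> S \<Longrightarrow> w \<in> T \<Longrightarrow> tens u w \<in> X"
  shows "tsub S T \<subseteq> X"
  unfolding tsub_def using assms by (intro vec.span_minimal) auto

lemma matrix_vector_eq_on_tsub:
  assumes "z \<in> tsub S T" "\<And>u w. u \<in> S \<Longrightarrow> w \<in> T \<Longrightarrow> M *v tens u w = N *v tens u w"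
  shows "M *v z = N *v z"
proof -
  have "tsub S T \<subseteq> {z. M *v z = N *v z}"
    using assms(2) by (intro tsub_subset_subspace) (auto simp: vec.subspace_def vec.add vec.scale)
  then show ?thesis using assms(1) by auto
qed

lemma matrix_vector_mult_in_tsub:
  assumes "z \<in> tsub S T" "\<And>u w. u \<in> S \<Longrightarrow> w \<in> T \<Longrightarrow> M *v tens u w \<in> tsub S' T'"
  shows "M *v z \<in> tsub S' T'"
proof -
  have "vec.subspace (tsub S' T')"
    unfolding tsub_def by (rule vec.subspace_span)
  then have "tsub S T \<subseteq> {z. M *v z \<in> tsub S' T'}"
    using assms(2) by (intro tsub_subset_subspace) (auto simp: vec.subspace_def vec.add vec.scale)
  then show ?thesis using assms(1) by auto
qed

lemma tens_axis: "tens (axis a 1) (axis b 1) = (axis (a, b) 1 :: 'a::field^('n::finite \<times> 'k::finite))"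
  by (auto simp: vec_eq_iff tens_def axis_def)

lemma in_tsub_UNIV: "(z::'a::field^('n::finite \<times> 'k::finite)) \<in> tsub UNIV UNIV"
proof -
  have "z = (\<Sum>q\<in>UNIV. (z $ q) *s tens (axis (fst q) 1) (axis (snd q) 1))"
    by (simp add: tens_axis basis_expansion)
  also have "\<dots> \<in> tsub UNIV UNIV"
    unfolding tsub_def by (intro vec.span_sum vec.span_scale vec.span_base) auto
  finally show ?thesis .
qed

text \<open>z = \<Sum>_b slice1 b z \<otimes> e_b = \<Sum>_a e_a \<otimes> slice2 a z for the standard bases e.\<close>

definition slice1 :: "'k::finite \<Rightarrow> 'a^('n::finite \<times> 'k) \<Rightarrow> 'a^'n" where
  "slice1 b z = (\<chi> a. z $ (a, b))"

definition slice2 :: "'n::finite \<Rightarrow> 'a^('n \<times> 'k::finite) \<Rightarrow> 'a^'k" where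
  "slice2 a z = (\<chi> b. z $ (a, b))"

lemma slice_linear [simp]:
  "slice1 b (x + y) = slice1 b x + slice1 b y" "slice1 b (c *s x) = c *s slice1 b x" "slice1 b 0 = 0"
  "slice2 a (x + y) = slice2 a x + slice2 a y" "slice2 a (c *s x) = c *s slice2 a x" "slice2 a 0 = 0"
  by (auto simp: vec_eq_iff slice1_def slice2_def)

lemma slice1_kron_mat_1:
  "slice1 b (kron A (mat 1) *v z) = A *v slice1 b (z::'a::field^('n::finite \<times> 'k::finite))"
proof -
  have "(\<Sum>a'\<in>UNIV. \<Sum>b'\<in>UNIV. A $ a $ a' * (if b = b' then 1 else 0) * z $ (a', b')) =
        (\<Sum>a'\<in>UNIV. A $ a $ a' * z $ (a', b))" for a
    by (intro sum.cong refl) (simp add: if_distrib if_distribR cong: if_cong)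
  then show ?thesis
    by (simp add: vec_eq_iff slice1_def kron_def mat_def matrix_vector_mult_def sum_UNIV_prod)
qed

lemma slice2_kron_mat_1:
  "slice2 a (kron (mat 1) B *v z) = B *v slice2 a (z::'a::field^('n::finite \<times> 'k::finite))"
proof -
  have "(\<Sum>a'\<in>UNIV. \<Sum>b'\<in>UNIV. (if a = a' then 1 else 0) * B $ b $ b' * z $ (a', b')) =
        (\<Sum>b'\<in>UNIV. B $ b $ b' * z $ (a, b'))" for b
    by (subst sum.swap) (simp add: if_distrib if_distribR cong: if_cong)
  then show ?thesis
    by (simp add: vec_eq_iff slice2_def kron_def mat_def matrix_vector_mult_def sum_UNIV_prod)
qed

lemma slice1_tens: "slice1 b (tens u w) = (w $ b) *s u"
  by (simp add: vec_eq_iff slice1_def tens_def mult_ac)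

lemma slice1_in:
  assumes "z \<in> tsub S T" "vec.subspace S"
  shows "slice1 b z \<in> S"
proof -
  have "tsub S T \<subseteq> {z. slice1 b z \<in> S}"
    using assms(2) by (intro tsub_subset_subspace) (auto simp: vec.subspace_def slice1_tens)
  then show ?thesis using assms(1) by auto
qed

lemma slice2_tens: "slice2 a (tens u w) = (u $ a) *s w"
  by (simp add: vec_eq_iff slice2_def tens_def mult_ac)

lemma slice2_in:
  assumes "z \<in> tsub S T" "vec.subspace T"
  shows "slice2 a z \<in> T"
proof -
  have "tsub S T \<subseteq> {z. slice2 a z \<in> T}"
    using assms(2) by (intro tsub_subset_subspace) (auto simp: vec.subspace_def slice2_tens)
  then show ?thesis using assms(1) by auto
qed

lemma tsub_common_kernel_left_trivial:
  assumes "z \<in> tsub S T" "vec.subspace S"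
    and "\<And>x. x \<in> S \<Longrightarrow> \<forall>s\<in>I. Q s *v x = 0 \<Longrightarrow> x = 0"
    and "\<forall>s\<in>I. kron (Q s) (mat 1) *v z = 0"
  shows "z = 0"
proof -
  have "slice1 b z = 0" for b
  proof (rule assms(3))
    show "slice1 b z \<in> S" using assms(1,2) by (rule slice1_in)
    show "\<forall>s\<in>I. Q s *v slice1 b z = 0"
      using assms(4) by (simp flip: slice1_kron_mat_1)
  qed
  then show ?thesis by (simp add: slice1_def vec_eq_iff)
qed

lemma tsub_common_kernel_right_trivial:
  assumes "z \<in> tsub S T" "vec.subspace T"
    and "\<And>x. x \<in> T \<Longrightarrow> \<forall>s\<in>I. Q s *v x = 0 \<Longrightarrow> x = 0"
    and "\<forall>s\<in>I. kron (mat 1) (Q s) *v z = 0"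
  shows "z = 0"
proof -
  have "slice2 a z = 0" for a
  proof (rule assms(3))
    show "slice2 a z \<in> T" using assms(1,2) by (rule slice2_in)
    show "\<forall>s\<in>I. Q s *v slice2 a z = 0"
      using assms(4) by (simp flip: slice2_kron_mat_1)
  qed
  then show ?thesis by (simp add: slice2_def vec_eq_iff)
qed

locale tensor_decomposition =
  V: direct_sum_decomposition l U + W: direct_sum_decomposition l' U'
  for l :: nat and U :: "nat \<Rightarrow> ('a::field^'n::finite) set"
    and l' :: nat and U' :: "nat \<Rightarrow> ('a^'k::finite) set"
begin

lemma kron_proj_tsub:
  assumes "i \<le> l" "j \<le> l'" "c \<le> l" "d \<le> l'" "y \<in> tsub (U c) (U' d)"
  shows "kron (V.proj i) (W.proj j) *v y = (if (i, j) = (c, d) then y else 0)"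
proof -
  have "kron (V.proj i) (W.proj j) *v y = (if (i, j) = (c, d) then mat 1 else 0) *v y"
  proof (rule matrix_vector_eq_on_tsub[OF assms(5)])
    fix u w assume "u \<in> U c" "w \<in> U' d"
    then show "kron (V.proj i) (W.proj j) *v tens u w
        = (if (i, j) = (c, d) then mat 1 else 0) *v tens u w"
      using assms by (simp add: kron_tens V.proj_summand W.proj_summand)
  qed
  then show ?thesis by simp
qed

lemma kron_proj_in_tsub:
  assumes "i \<le> l" "j \<le> l'"
  shows "kron (V.proj i) (W.proj j) *v z \<in> tsub (U i) (U' j)"
proof (rule matrix_vector_mult_in_tsub[OF in_tsub_UNIV])
  fix u w
  show "kron (V.proj i) (W.proj j) *v tens u w \<in> tsub (U i) (U' j)"
    unfolding kron_tens using assms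
    by (intro tens_in_tsub V.proj_in_summand W.proj_in_summand)
qed

lemma sum_kron_proj: "(\<Sum>p\<in>{..l} \<times> {..l'}. kron (V.proj (fst p)) (W.proj (snd p))) = mat 1"
proof -
  have "(\<Sum>p\<in>{..l} \<times> {..l'}. kron (V.proj (fst p)) (W.proj (snd p)))
      = (\<Sum>i\<le>l. \<Sum>j\<le>l'. kron (V.proj i) (W.proj j))"
    by (simp add: sum.cartesian_product case_prod_beta)
  also have "\<dots> = kron (\<Sum>i\<le>l. V.proj i) (\<Sum>j\<le>l'. W.proj j)"
    by (subst sum.swap) (simp add: kron_sum_left kron_sum_right)
  finally show ?thesis by (simp add: V.sum_proj W.sum_proj kron_mat_1)
qed

lemma component_eq_kron_proj:
  assumes "i \<le> l" "j \<le> l'"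
  shows "component ({..l} \<times> {..l'}) (\<lambda>(i, j). tsub (U i) (U' j)) z (i, j)
       = kron (V.proj i) (W.proj j) *v z"
  unfolding component_def
proof (rule the_equality)
  let ?ys = "\<lambda>p. kron (V.proj (fst p)) (W.proj (snd p)) *v z"
  show "\<exists>ys. (\<forall>p\<in>{..l} \<times> {..l'}. ys p \<in> (\<lambda>(i, j). tsub (U i) (U' j)) p)
      \<and> sum ys ({..l} \<times> {..l'}) = z \<and> ys (i, j) = kron (V.proj i) (W.proj j) *v z"
  proof (intro exI conjI ballI)
    show "?ys p \<in> (\<lambda>(i, j). tsub (U i) (U' j)) p" if "p \<in> {..l} \<times> {..l'}" for p
      using that kron_proj_in_tsub by (auto simp: case_prod_beta)
    show "sum ?ys ({..l} \<times> {..l'}) = z"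
      by (simp add: sum_matrix_vector_mult[symmetric] sum_kron_proj)
  qed simp
next
  fix y assume "\<exists>ys. (\<forall>p\<in>{..l} \<times> {..l'}. ys p \<in> (\<lambda>(i, j). tsub (U i) (U' j)) p)
      \<and> sum ys ({..l} \<times> {..l'}) = z \<and> ys (i, j) = y"
  then obtain ys where ys: "\<forall>p\<in>{..l} \<times> {..l'}. ys p \<in> (\<lambda>(i, j). tsub (U i) (U' j)) p"
    and "sum ys ({..l} \<times> {..l'}) = z" "ys (i, j) = y" by blast
  then have "kron (V.proj i) (W.proj j) *v z
      = (\<Sum>p\<in>{..l} \<times> {..l'}. kron (V.proj i) (W.proj j) *v ys p)"
    using vec.sum by metis
  also have "\<dots> = (\<Sum>p\<in>{..l} \<times> {..l'}. if (i, j) = p then ys p else 0)"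
    using assms ys kron_proj_tsub by (intro sum.cong) (auto split: if_splits)
  also have "\<dots> = y" using assms \<open>ys (i, j) = y\<close> by simp
  finally show "y = kron (V.proj i) (W.proj j) *v z" by simp
qed

lemma component_tact_left:
  assumes "i \<le> l" "i' \<le> l" "i' \<noteq> i" "j \<le> l'" "z \<in> tsub (U i) (U' j)"
  shows "component ({..l} \<times> {..l'}) (\<lambda>(i, j). tsub (U i) (U' j)) (tact A B *v z) (i', j)
       = kron (V.proj i' ** A) (mat 1) *v z"
proof -
  have "component ({..l} \<times> {..l'}) (\<lambda>(i, j). tsub (U i) (U' j)) (tact A B *v z) (i', j)
      = (kron (V.proj i') (W.proj j) ** tact A B) *v z"
    using assms by (simp add: component_eq_kron_proj matrix_vector_mul_assoc)
  also have "\<dots> = kron (V.proj i' ** A) (mat 1) *v z"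
  proof (rule matrix_vector_eq_on_tsub[OF assms(5)])
    fix u w assume "u \<in> U i" "w \<in> U' j"
    then have "V.proj i' *v u = 0" "W.proj j *v w = w"
      using assms by (simp_all add: V.proj_summand W.proj_summand)
    then show "(kron (V.proj i') (W.proj j) ** tact A B) *v tens u w
        = kron (V.proj i' ** A) (mat 1) *v tens u w"
      by (simp add: matrix_vector_mul_assoc[symmetric] tact_tens kron_tens vec.add)
  qed
  finally show ?thesis .
qed

lemma component_tact_right:
  assumes "i \<le> l" "j \<le> l'" "j' \<le> l'" "j' \<noteq> j" "z \<in> tsub (U i) (U' j)"
  shows "component ({..l} \<times> {..l'}) (\<lambda>(i, j). tsub (U i) (U' j)) (tact A B *v z) (i, j')
       = kron (mat 1) (W.proj j' ** B) *v z"
proof -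
  have "component ({..l} \<times> {..l'}) (\<lambda>(i, j). tsub (U i) (U' j)) (tact A B *v z) (i, j')
      = (kron (V.proj i) (W.proj j') ** tact A B) *v z"
    using assms by (simp add: component_eq_kron_proj matrix_vector_mul_assoc)
  also have "\<dots> = kron (mat 1) (W.proj j' ** B) *v z"
  proof (rule matrix_vector_eq_on_tsub[OF assms(5)])
    fix u w assume "u \<in> U i" "w \<in> U' j"
    then have "V.proj i *v u = u" "W.proj j' *v w = 0"
      using assms by (simp_all add: V.proj_summand W.proj_summand)
    then show "(kron (V.proj i) (W.proj j') ** tact A B) *v tens u w
        = kron (mat 1) (W.proj j' ** B) *v tens u w"
      by (simp add: matrix_vector_mul_assoc[symmetric] tact_tens kron_tens vec.add)
  qed
  finally show ?thesis .
qed

end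

section \<open>Uniserial g_m-modules\<close>

lemma msc_apply: "msc c A *v x = c *s (A *v x)"
  by (simp add: vec_eq_iff msc_def matrix_vector_mult_def sum_distrib_left mult_ac)

lemma matrix_vector_mult_swap_bracket: "B *v (A *v x) = A *v (B *v x) - bracket A B *v x"
  by (simp add: bracket_def matrix_vector_mul_assoc matrix_vector_mult_diff_rdistrib)

lemma sl2_submodule_iff:
  "sl2_submodule \<rho> X \<longleftrightarrow> vec.subspace X \<and> (\<forall>A\<in>{eop \<rho>, hop \<rho>, fop \<rho>}. \<forall>x\<in>X. A *v x \<in> X)"
  by (auto simp: sl2_submodule_def)

lemma bracket_sl2_rop:
  assumes "gm_module m \<rho>" "A \<in> {eop \<rho>, hop \<rho>, fop \<rho>}" "s \<le> m"
  shows "\<exists>c t. t \<le> m \<and> bracket A (rop \<rho> s) = msc c (rop \<rho> t)"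
proof -
  \<comment> \<open>where the bracket vanishes (s = 0 for e, s = m for f) the witness is c = 0\<close>
  have msc_0: "msc 0 (rop \<rho> t) = 0" and msc_1: "msc 1 (rop \<rho> t) = rop \<rho> t" for t
    by (simp_all add: msc_def vec_eq_iff)
  have "bracket (eop \<rho>) (rop \<rho> s)
      = msc (if s = 0 then 0 else of_nat (s * (m + 1 - s))) (rop \<rho> (s - 1))"
    and "bracket (hop \<rho>) (rop \<rho> s) = msc (of_int (int m - 2 * int s)) (rop \<rho> s)"
    and "bracket (fop \<rho>) (rop \<rho> s) = msc (if s = m then 0 else 1) (rop \<rho> (min (s + 1) m))"
    using assms(1,3) msc_0 msc_1 by (simp_all add: gm_module_def)
  moreover have "s - 1 \<le> m" "min (s + 1) m \<le> m" using assms(3) by auto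
  ultimately show ?thesis using assms(2,3) by blast
qed

lemma rop_annihilator_invariant:
  assumes "gm_module m \<rho>" "A \<in> {eop \<rho>, hop \<rho>, fop \<rho>}" "Q ** A = A ** Q"
    and "\<forall>t\<le>m. Q *v (rop \<rho> t *v y) = 0" "s \<le> m"
  shows "Q *v (rop \<rho> s *v (A *v y)) = 0"
proof -
  obtain c t where "t \<le> m" "bracket A (rop \<rho> s) = msc c (rop \<rho> t)"
    using bracket_sl2_rop[OF assms(1,2,5)] by blast
  then have "rop \<rho> s *v (A *v y) = A *v (rop \<rho> s *v y) - c *s (rop \<rho> t *v y)"
    using matrix_vector_mult_swap_bracket[of "rop \<rho> s" A y] by (simp add: msc_apply)
  then show ?thesis
    using assms(3-5) \<open>t \<le> m\<close> by (simp add: vec.diff vec.scale commuting_matrix_vector_mult)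
qed

locale uniserial_socle_decomposition =
  fixes m :: nat and \<rho> :: "('a::field_char_0, 'n::finite) gmrep"
    and l :: nat and U :: "nat \<Rightarrow> ('a^'n) set"
  assumes gm_module: "gm_module m \<rho>"
    and uniserial: "uniserial m \<rho>"
    and socle_decomp: "socle_decomp m \<rho> l U"

sublocale uniserial_socle_decomposition \<subseteq> direct_sum_decomposition l U
  by unfold_locales
    (use socle_decomp in \<open>auto simp: socle_decomp_def sl2_irred_def sl2_submodule_def\<close>)

context uniserial_socle_decomposition
begin

lemma sl2_irred_summand: "k \<le> l \<Longrightarrow> sl2_irred \<rho> (U k)"
  using socle_decomp by (simp add: socle_decomp_def)

lemma sl2_submodule_summand: "k \<le> l \<Longrightarrow> sl2_submodule \<rho> (U k)"
  using sl2_irred_summand by (simp add: sl2_irred_def)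

lemma summand_nonzero: "k \<le> l \<Longrightarrow> \<exists>x\<in>U k. x \<noteq> 0"
  using sl2_irred_summand[of k] vec.subspace_0[OF subspace_summand[of k]]
  by (auto simp: sl2_irred_def)

lemma proj_commute_sl2: "i \<le> l \<Longrightarrow> A \<in> {eop \<rho>, hop \<rho>, fop \<rho>} \<Longrightarrow> proj i ** A = A ** proj i"
  using sl2_submodule_summand by (intro proj_commute) (auto simp: sl2_submodule_iff)

lemma sl2_submodule_partial_sum: "sl2_submodule \<rho> (partial_sum J)"
  using subspace_partial_sum partial_sum_invariant sl2_submodule_summand
  by (auto simp: sl2_submodule_iff)

lemma soc_eq_partial_sum:
  assumes "k \<le> l + 1"
  shows "soc m \<rho> k = partial_sum {..<k}"
proof -
  have "{..<k} \<subseteq> {..l}" using assms by auto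
  then show ?thesis
    using assms socle_decomp span_summands_eq_partial_sum by (simp add: socle_decomp_def)
qed

lemma simple_quot_soc: "k \<le> l \<Longrightarrow> simple_quot m \<rho> (soc m \<rho> k) (soc m \<rho> (Suc k))"
proof -
  assume "k \<le> l"
  then obtain x where "x \<in> U k" "x \<noteq> 0" using summand_nonzero by blast
  then have "x \<notin> soc m \<rho> k"
    using \<open>k \<le> l\<close> soc_eq_partial_sum summand_inter_partial_sum[of k "{..<k}" x] by auto
  then show ?thesis using uniserial by (auto simp: uniserial_def)
qed

lemma gm_submodule_partial_sum_lessThan: "k \<le> l + 1 \<Longrightarrow> gm_submodule m \<rho> (partial_sum {..<k})"
proof -
  assume "k \<le> l + 1"
  then have "gm_submodule m \<rho> (soc m \<rho> k)"
    using simple_quot_soc[of k] simple_quot_soc[of "k - 1"]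
    by (cases "k \<le> l") (auto simp: simple_quot_def simp del: soc.simps)
  then show ?thesis using \<open>k \<le> l + 1\<close> soc_eq_partial_sum by simp
qed

lemma simple_quot_partial_sum_insert:
  assumes "i \<le> l" "i \<notin> J"
    and "gm_submodule m \<rho> (partial_sum J)" "gm_submodule m \<rho> (partial_sum (insert i J))"
  shows "simple_quot m \<rho> (partial_sum J) (partial_sum (insert i J))"
  unfolding simple_quot_def
proof (intro conjI allI impI assms(3,4))
  obtain x where "x \<in> U i" "x \<noteq> 0" using summand_nonzero[OF assms(1)] by blast
  then have "x \<in> partial_sum (insert i J)" "x \<notin> partial_sum J"
    using assms(1,2) summand_subset_partial_sum[of i "insert i J"] summand_inter_partial_sum[of i J x]
    by auto
  then show "partial_sum J \<subset> partial_sum (insert i J)"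
    using partial_sum_mono[of J "insert i J"] by auto
next
  fix N assume N: "gm_submodule m \<rho> N \<and> partial_sum J \<subseteq> N \<and> N \<subseteq> partial_sum (insert i J)"
  then have "vec.subspace N" by (simp add: gm_submodule_def sl2_submodule_def)
  have diff_proj_in_N: "y - proj i *v y \<in> N" if "y \<in> partial_sum (insert i J)" for y
    using N diff_proj_in_partial_sum[OF assms(1) that] by blast
  have "sl2_submodule \<rho> (N \<inter> U i)"
    using N sl2_submodule_summand[OF assms(1)]
    by (auto simp: gm_submodule_def sl2_submodule_def intro: vec.subspace_inter)
  then have "N \<inter> U i = {0} \<or> N \<inter> U i = U i"
    using sl2_irred_summand[OF assms(1)] by (auto simp: sl2_irred_def)
  then show "N = partial_sum J \<or> N = partial_sum (insert i J)"
  proof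
    assume N0: "N \<inter> U i = {0}"
    have "y \<in> partial_sum J" if "y \<in> N" for y
    proof -
      have "y - (y - proj i *v y) \<in> N"
        using \<open>vec.subspace N\<close> that N diff_proj_in_N by (blast intro: vec.subspace_diff)
      then have "proj i *v y = 0" using N0 proj_in_summand[OF assms(1)] by auto
      then show ?thesis using that N diff_proj_in_partial_sum[OF assms(1)] by force
    qed
    then show ?thesis using N by blast
  next
    assume "N \<inter> U i = U i"
    then have "proj i *v y \<in> N" for y using proj_in_summand[OF assms(1)] by blast
    then have "(y - proj i *v y) + proj i *v y \<in> N" if "y \<in> partial_sum (insert i J)" for y
      using \<open>vec.subspace N\<close> that diff_proj_in_N by (blast intro: vec.subspace_add)
    then show ?thesis using N by auto
  qed
qed

lemma sl2_submodule_rop_annihilator: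
  assumes "k \<le> l" "i \<le> l"
  shows "sl2_submodule \<rho> {y \<in> U i. \<forall>s\<le>m. proj k *v (rop \<rho> s *v y) = 0}"
  unfolding sl2_submodule_iff
proof (intro conjI ballI)
  show "vec.subspace {y \<in> U i. \<forall>s\<le>m. proj k *v (rop \<rho> s *v y) = 0}"
    using subspace_summand[OF assms(2)] by (auto simp: vec.subspace_def vec.add vec.scale)
next
  fix A y
  assume "A \<in> {eop \<rho>, hop \<rho>, fop \<rho>}" and "y \<in> {y \<in> U i. \<forall>s\<le>m. proj k *v (rop \<rho> s *v y) = 0}"
  then show "A *v y \<in> {y \<in> U i. \<forall>s\<le>m. proj k *v (rop \<rho> s *v y) = 0}"
    using rop_annihilator_invariant[OF gm_module _ proj_commute_sl2[OF assms(1)]]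
      sl2_submodule_summand[OF assms(2)]
    by (auto simp: sl2_submodule_iff)
qed

lemma proj_rop_vanishes_on_summand:
  assumes "k \<le> l" "i \<le> l" "x \<in> U i" "x \<noteq> 0" "\<forall>s\<le>m. proj k *v (rop \<rho> s *v x) = 0"
    and "y \<in> U i" "s \<le> m"
  shows "proj k *v (rop \<rho> s *v y) = 0"
proof -
  let ?X = "{y \<in> U i. \<forall>s\<le>m. proj k *v (rop \<rho> s *v y) = 0}"
  have "?X = {0} \<or> ?X = U i"
    using sl2_irred_summand[OF assms(2)] sl2_submodule_rop_annihilator[OF assms(1,2)]
    by (auto simp: sl2_irred_def)
  moreover have "x \<in> ?X" using assms(3,5) by simp
  ultimately have "?X = U i" using assms(4) by auto
  then show ?thesis using assms(6,7) by blast
qed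

lemma gm_submodule_partial_sum_insert_Suc:
  assumes "Suc k \<le> l" and "\<forall>y\<in>U (Suc k). \<forall>s\<le>m. proj k *v (rop \<rho> s *v y) = 0"
  shows "gm_submodule m \<rho> (partial_sum (insert (Suc k) {..<k}))"
proof -
  let ?N = "partial_sum (insert (Suc k) {..<k})"
  have "rop \<rho> s *v y \<in> ?N" if "y \<in> ?N" "s \<le> m" for y s
  proof -
    have "rop \<rho> s *v (y - proj (Suc k) *v y) \<in> partial_sum {..<k}"
      using gm_submodule_partial_sum_lessThan[of k] diff_proj_in_partial_sum[OF assms(1) that(1)]
        assms(1) that(2) by (simp add: gm_submodule_def)
    then have "rop \<rho> s *v (y - proj (Suc k) *v y) \<in> ?N"
      using partial_sum_mono[of "{..<k}" "insert (Suc k) {..<k}"] by blast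
    moreover have "rop \<rho> s *v (proj (Suc k) *v y) \<in> ?N"
      unfolding partial_sum_def
    proof (intro CollectI allI impI)
      fix j assume j: "j \<le> l" "j \<notin> insert (Suc k) {..<k}"
      have "rop \<rho> s *v (proj (Suc k) *v y) \<in> partial_sum {..<Suc (Suc k)}"
        using gm_submodule_partial_sum_lessThan[of "Suc (Suc k)"] assms(1) that(2)
          summand_subset_partial_sum[of "Suc k" "{..<Suc (Suc k)}"] proj_in_summand[OF assms(1)]
        by (auto simp: gm_submodule_def)
      moreover have "proj k *v (rop \<rho> s *v (proj (Suc k) *v y)) = 0"
        using assms proj_in_summand that(2) by blast
      moreover have "j = k \<or> Suc (Suc k) \<le> j" using j by auto
      ultimately show "proj j *v (rop \<rho> s *v (proj (Suc k) *v y)) = 0"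
        using j by (auto simp: partial_sum_def)
    qed
    ultimately have "rop \<rho> s *v (y - proj (Suc k) *v y) + rop \<rho> s *v (proj (Suc k) *v y) \<in> ?N"
      using subspace_partial_sum by (blast intro: vec.subspace_add)
    then show ?thesis by (simp add: vec.diff)
  qed
  then show ?thesis using sl2_submodule_partial_sum by (simp add: gm_submodule_def)
qed

lemma proj_pred_rop_nonzero:
  assumes "0 < i" "i \<le> l" "x \<in> U i" "x \<noteq> 0"
  shows "\<exists>s\<le>m. proj (i - 1) *v (rop \<rho> s *v x) \<noteq> 0"
proof (rule ccontr)
  assume all_zero: "\<not> ?thesis"
  obtain k where i: "i = Suc k" using assms(1) gr0_implies_Suc by blast
  let ?N = "partial_sum (insert i {..<k})"
  have "\<forall>y\<in>U i. \<forall>s\<le>m. proj k *v (rop \<rho> s *v y) = 0"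
    using all_zero assms proj_rop_vanishes_on_summand[of k i x] i by auto
  then have "gm_submodule m \<rho> ?N"
    using assms(2) gm_submodule_partial_sum_insert_Suc i by simp
  then have "simple_quot m \<rho> (soc m \<rho> k) ?N"
    using simple_quot_partial_sum_insert[of i "{..<k}"] gm_submodule_partial_sum_lessThan[of k]
      soc_eq_partial_sum[of k] assms(2) i by simp
  then have "?N \<subseteq> soc m \<rho> i"
    unfolding i soc.simps(2) by (auto intro: vec.span_base)
  moreover have "x \<in> ?N" using assms(2,3) summand_subset_partial_sum[of i "insert i {..<k}"] by auto
  ultimately show False
    using assms(2-4) soc_eq_partial_sum[of i] summand_inter_partial_sum[of i "{..<i}" x] by auto
qed

end

lemma component_tact_pred_left_nonzero:
  fixes U' :: "nat \<Rightarrow> ('a::field_char_0^'k::finite) set"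
  assumes "uniserial_socle_decomposition m \<rho> l U" "direct_sum_decomposition l' U'"
    and "0 < i" "i \<le> l" "j \<le> l'" "v \<in> tsub (U i) (U' j)" "v \<noteq> 0"
  shows "\<exists>s\<le>m. component ({..l} \<times> {..l'}) (\<lambda>(i, j). tsub (U i) (U' j))
                 (tact (rop \<rho> s) (B s) *v v) (i - 1, j) \<noteq> 0"
proof -
  interpret V: uniserial_socle_decomposition m \<rho> l U by fact
  interpret T: tensor_decomposition l U l' U'
    using V.direct_sum_decomposition_axioms assms(2) by (simp add: tensor_decomposition_def)
  have "\<exists>s\<in>{..m}. kron (V.proj (i - 1) ** rop \<rho> s) (mat 1) *v v \<noteq> 0"
  proof (rule ccontr)
    assume "\<not> (\<exists>s\<in>{..m}. kron (V.proj (i - 1) ** rop \<rho> s) (mat 1) *v v \<noteq> 0)"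
    then have "v = 0"
      using V.proj_pred_rop_nonzero[OF assms(3,4)]
      by (intro tsub_common_kernel_left_trivial[OF assms(6) V.subspace_summand[OF assms(4)],
            of "{..m}" "\<lambda>s. V.proj (i - 1) ** rop \<rho> s"])
        (auto simp flip: matrix_vector_mul_assoc)
    then show False using assms(7) by simp
  qed
  then show ?thesis using T.component_tact_left[OF assms(4) _ _ assms(5,6)] assms(3,4) by auto
qed

lemma component_tact_pred_right_nonzero:
  fixes U :: "nat \<Rightarrow> ('a::field_char_0^'n::finite) set"
  assumes "direct_sum_decomposition l U" "uniserial_socle_decomposition m \<sigma> l' U'"
    and "i \<le> l" "0 < j" "j \<le> l'" "v \<in> tsub (U i) (U' j)" "v \<noteq> 0"
  shows "\<exists>s\<le>m. component ({..l} \<times> {..l'}) (\<lambda>(i, j). tsub (U i) (U' j))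
                 (tact (A s) (rop \<sigma> s) *v v) (i, j - 1) \<noteq> 0"
proof -
  interpret W: uniserial_socle_decomposition m \<sigma> l' U' by fact
  interpret T: tensor_decomposition l U l' U'
    using assms(1) W.direct_sum_decomposition_axioms by (simp add: tensor_decomposition_def)
  have "\<exists>s\<in>{..m}. kron (mat 1) (W.proj (j - 1) ** rop \<sigma> s) *v v \<noteq> 0"
  proof (rule ccontr)
    assume "\<not> (\<exists>s\<in>{..m}. kron (mat 1) (W.proj (j - 1) ** rop \<sigma> s) *v v \<noteq> 0)"
    then have "v = 0"
      using W.proj_pred_rop_nonzero[OF assms(4,5)]
      by (intro tsub_common_kernel_right_trivial[OF assms(6) W.subspace_summand[OF assms(5)],
            of "{..m}" "\<lambda>s. W.proj (j - 1) ** rop \<sigma> s"])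
        (auto simp flip: matrix_vector_mul_assoc)
    then show False using assms(7) by simp
  qed
  then show ?thesis using T.component_tact_right[OF assms(3,5) _ _ assms(6)] assms(4,5) by auto
qed

theorem lemma3p1:
  fixes m :: nat
    and \<rho> :: "('a::field_char_0, 'n::finite) gmrep"
    and \<sigma> :: "('a, 'k::finite) gmrep"
    and l l' :: nat
    and U :: "nat \<Rightarrow> ('a^'n) set"
    and U' :: "nat \<Rightarrow> ('a^'k) set"
    and i0 j0 :: nat
    and v0 :: "'a^('n \<times> 'k)"
  assumes "m \<ge> 1"
    and "gm_module m \<rho>" and "gm_module m \<sigma>"
    and "uniserial m \<rho>" and "uniserial m \<sigma>"
    and "socle_decomp m \<rho> l U" and "socle_decomp m \<sigma> l' U'"
    and "l \<ge> 1" and "l' \<ge> 1"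
    and "i0 \<le> l" and "j0 \<le> l'"
    and "v0 \<in> tsub (U i0) (U' j0)" and "v0 \<noteq> 0"
    and "\<exists>c. tact (hop \<rho>) (hop \<sigma>) *v v0 = c *s v0"
    and "tact (eop \<rho>) (eop \<sigma>) *v v0 = 0"
  shows "((\<forall>s\<le>m. (if i0 = 0 then 0 else
             component ({..l} \<times> {..l'}) (\<lambda>(i, j). tsub (U i) (U' j))
               (tact (rop \<rho> s) (rop \<sigma> s) *v v0) (i0 - 1, j0)) = 0) \<longleftrightarrow> i0 = 0) \<and>
         ((\<forall>s\<le>m. (if j0 = 0 then 0 else
             component ({..l} \<times> {..l'}) (\<lambda>(i, j). tsub (U i) (U' j))
               (tact (rop \<rho> s) (rop \<sigma> s) *v v0) (i0, j0 - 1)) = 0) \<longleftrightarrow> j0 = 0)"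
proof -
  interpret V: uniserial_socle_decomposition m \<rho> l U using assms by unfold_locales
  interpret W: uniserial_socle_decomposition m \<sigma> l' U' using assms by unfold_locales
  show ?thesis
    using component_tact_pred_left_nonzero[OF V.uniserial_socle_decomposition_axioms
        W.direct_sum_decomposition_axioms, of i0 j0 v0 "rop \<sigma>"]
      component_tact_pred_right_nonzero[OF V.direct_sum_decomposition_axioms
        W.uniserial_socle_decomposition_axioms, of i0 j0 v0 "rop \<rho>"]
      assms(10-13)
    by auto
qed
end
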